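(* Fix a nominal pair $(z_k,v_k)\in\mathcal{X}\times\mathcal{U}$ and a set $\mathcal{R}_k\subseteq\mathcal{X}\times\mathcal{U}$ containing it. Let $M(\mathcal{R}_k)\ge0$ satisfy $\|[x^\top,u^\top]-[z_k^\top,v_k^\top]\|_2\le M(\mathcal{R}_k)$ for all $(x,u)\in\mathcal{R}_k$. Fix $(x,u)\in\mathcal{R}_k$. Let $s_{1,k},\dots,s_{n,k},s_{k,k},\tilde s_{k,k}$ be scores such that: - each of the tuples $(s_{1,k},\dots,s_{n,k},s_{k,k})$ and $(s_{1,k},\dots,s_{n,k},\tilde s_{k,k})$ consists of mutually independent random variables; - $s_{i,k}\sim S_{i,k}$ is the score $s_k(x_i,u_i,f(x_i,u_i))$ of calibration point $i$; - $s_{k,k}\sim S_{k,k}$ is the score at the nominal point; - $\tilde s_{k,k}=s_k(x,u,f(x,u))\sim\tilde S_{k,k}$ is the score at $(x,u)$. Assume $d_{\mathrm{TV}}(S_{i,k},S_{k,k})\le\epsilon\|[z_k^\top,v_k^\top]-[x_i^\top,u_i^\top]\|_2$ for all $i$. Assume also, for some $\hat\epsilon\le\epsilon$, that $d_{\mathrm{TV}}(S_{k,k},\tilde S_{k,k})\le\hat\epsilon\,\|[x^\top,u^\top]-[z_k^\top,v_k^\top]\|_2$. Then $$\Pr\big[\varepsilon(x,u)\in\mathcal{E}(z_k,v_k)\big]\ge 1-\alpha_k-2\sum_{i=1}^n\tilde w_i\, d_{\mathrm{TV}}(S_{i,k},S_{k,k})-\gamma(\mathcal{R}_k),\qquad \gamma(\mathcal{R}_k):=2\hat\epsilon\,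 M(\mathcal{R}_k).$$
   Context: Dynamics and model error: - The true deterministic dynamics are $x_{k+1}=f(x_k,u_k)$ with $f:\mathcal{X}\times\mathcal{U}\to\mathcal{X}$, $\mathcal{X}\subseteq\mathbb{R}^{n_x}$, $\mathcal{U}\subseteq\mathbb{R}^{n_u}$. - $\hat f$ is a learned model, and $\varepsilon(x,u):=f(x,u)-\hat f(x,u)$ is the model error. - $\mathbf{\Sigma}:\mathcal{X}\times\mathcal{U}\to\mathbb{R}^{n_x\times n_x}$ is a positive-definite-matrix-valued function. Nonconformity score: for a nominal pair $(z_k,v_k)$, define $$s_k(x,u,y):=\sqrt{(y-\hat f(x,u))^\top\mathbf{\Sigma}(z_k,v_k)^{-1}(y-\hat f(x,u))}.$$ Calibration data: $(x_i,u_i,f(x_i,u_i))$, $i=1,\dots,n$. Let $d_i:=\|[z_k^\top,v_k^\top]-[x_i^\top,u_i^\top]\|_2$. Weights: fix $\rho\in(0,1]$ and set $w_i=\rho^{d_i}$, $w_{\mathrm{test}}=1$. Normalize as $\tilde w_i=w_i/(1+\sum_j w_j)$ and $\tilde w_{\mathrm{test}}=1/(1+\sum_j w_j)$. Quantile: for $\alpha_k\in(0,1)$, $q_{1-\alpha_k}(z_k,v_k)$ is the $(1-\alpha_k)$-quantile of the weighted empirical distribution $\sum_{i=1}^n\tilde w_i\delta_{s_{i,k}}+\tilde w_{\mathrm{test}}\delta_{+\infty}$, where $s_{i,k}:=s_k(x_i,u_i,f(x_i,u_i))$. Error set: $$\mathcal{E}(z_k,v_k):=\{e\in\mathbb{R}^{n_x}:\sqrt{e^\top\mathbf{\Sigma}(z_k,v_k)^{-1}e}\le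 q_{1-\alpha_k}(z_k,v_k)\}.$$ Equivalently, $\mathcal{E}(z_k,v_k)=q_{1-\alpha_k}L\,\mathcal{B}^{n_x}$, where $L$ is the Cholesky factor of $\mathbf{\Sigma}(z_k,v_k)$ and $\mathcal{B}^{n_x}$ is the unit 2-norm ball. $d_{\mathrm{TV}}$ denotes the total-variation distance. *)

theory Defs
  imports "HOL-Probability.Probability"
begin

definition tv_dist :: "'a measure \<Rightarrow> 'a measure \<Rightarrow> real" where
  "tv_dist P Q = (SUP A \<in> sets P. \<bar>measure P A - measure Q A\<bar>)"

text \<open>(1-alpha)-quantile of the weighted empirical distribution
  sum_{i<n} w i delta_{s i} + w_test delta_{+infinity}; the point mass at +infinity
  is never counted at finite thresholds, and the quantile is +infinity if
  no finite threshold reaches level 1-alpha.\<close>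
definition weighted_quantile :: "real \<Rightarrow> (nat \<Rightarrow> real) \<Rightarrow> (nat \<Rightarrow> real) \<Rightarrow> nat \<Rightarrow> ereal" where
  "weighted_quantile alpha w s n =
     Inf {ereal t | t. 1 - alpha \<le> (\<Sum>i\<in>{i. i < n \<and> s i \<le> t}. w i)}"

definition ncscore :: "real^'n^'n \<Rightarrow> real^'n \<Rightarrow> real" where
  "ncscore Sig e = sqrt (e \<bullet> (matrix_inv Sig *v e))"

definition error_set :: "real^'n^'n \<Rightarrow> ereal \<Rightarrow> (real^'n) set" where
  "error_set Sig q = {e. ereal (ncscore Sig e) \<le> q}"

end

theory Submission
  imports Defs
begin

(* Write L_0, ..., L_n for the laws of the calibration scores and of the test score, and give the
   test score the largest normalized weight. Exchanging coordinates k and n of the product law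
   changes the probability of any event by at most 2 d_TV(L_k, L_n), and it turns a miscoverage of
   the test score into the event that score k has weighted rank at least 1 - alpha among all n + 1
   scores. Pointwise, at most weight alpha of the scores can have such a rank, so averaging over k
   bounds the miscoverage by alpha + 2 sum_k w_k d_TV(L_k, L_n). By the triangle inequality,
   measuring these distances to the nominal score law instead of the law of the score at (x, u)
   costs at most 2 d_TV between the two, which is at most 2 epshat M(R_k). *)

lemma measure_diff_le_tv_dist:
  assumes "prob_space P" "prob_space Q" "A \<in> sets P"
  shows "\<bar>measure P A - measure Q A\<bar> \<le> tv_dist P Q"
  unfolding tv_dist_def
proof (rule cSUP_upper[OF assms(3)])
  have "\<bar>measure P B - measure Q B\<bar> \<le> 1" for B
    using prob_space.prob_le_1[OF assms(1), of B] prob_space.prob_le_1[OF assms(2), of B]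
      measure_nonneg[of P B] measure_nonneg[of Q B]
    by linarith
  then show "bdd_above ((\<lambda>A. \<bar>measure P A - measure Q A\<bar>) ` sets P)"
    by (intro bdd_aboveI[where M = 1]) blast
qed

lemma tv_dist_nonneg:
  assumes "prob_space P" "prob_space Q"
  shows "0 \<le> tv_dist P Q"
  using measure_diff_le_tv_dist[OF assms sets.empty_sets] by simp

lemma tv_dist_self: "tv_dist P P = 0"
proof -
  have "sets P \<noteq> {}" using sets.empty_sets by blast
  then show ?thesis by (simp add: tv_dist_def)
qed

lemma tv_dist_commute:
  assumes "sets P = sets Q"
  shows "tv_dist P Q = tv_dist Q P"
  unfolding tv_dist_def assms by (simp add: abs_minus_commute)

lemma tv_dist_triangle:
  assumes "prob_space P" "prob_space Q" "prob_space R" "sets P = sets Q"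
  shows "tv_dist P R \<le> tv_dist P Q + tv_dist Q R"
  unfolding tv_dist_def[of P R]
proof (rule cSUP_least)
  show "sets P \<noteq> {}" using sets.empty_sets by blast
  fix A assume "A \<in> sets P"
  then have "\<bar>measure P A - measure Q A\<bar> \<le> tv_dist P Q" "\<bar>measure Q A - measure R A\<bar> \<le> tv_dist Q R"
    using measure_diff_le_tv_dist assms by auto
  then show "\<bar>measure P A - measure R A\<bar> \<le> tv_dist P Q + tv_dist Q R"
    by linarith
qed

lemma sum_weighted_tv_dist_triangle:
  assumes P: "\<And>i. i < n \<Longrightarrow> prob_space (P i)" "\<And>i. i < n \<Longrightarrow> sets (P i) = sets Q"
    and Q: "prob_space Q" and R: "prob_space R"
    and w: "\<forall>i<n. 0 \<le> w i" and w_sum: "(\<Sum>i<n. w i) \<le> 1"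
  shows "(\<Sum>i<n. w i * tv_dist (P i) R) \<le> (\<Sum>i<n. w i * tv_dist (P i) Q) + tv_dist Q R"
proof -
  have "(\<Sum>i<n. w i * tv_dist (P i) R) \<le> (\<Sum>i<n. w i * (tv_dist (P i) Q + tv_dist Q R))"
    using P Q R w by (intro sum_mono mult_left_mono tv_dist_triangle) auto
  also have "\<dots> = (\<Sum>i<n. w i * tv_dist (P i) Q) + (\<Sum>i<n. w i) * tv_dist Q R"
    by (simp add: distrib_left sum.distrib sum_distrib_right)
  also have "(\<Sum>i<n. w i) * tv_dist Q R \<le> tv_dist Q R"
    using w w_sum tv_dist_nonneg[OF Q R] by (intro mult_left_le_one_le sum_nonneg) auto
  finally show ?thesis by simp
qed

lemma measure_pair_measure_le_tv_dist:
  assumes P: "prob_space P" and Q: "prob_space Q" and N: "prob_space N"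
    and sets_eq: "sets P = sets Q" and A: "A \<in> sets (P \<Otimes>\<^sub>M N)"
  shows "measure (P \<Otimes>\<^sub>M N) A \<le> measure (Q \<Otimes>\<^sub>M N) A + tv_dist P Q"
proof -
  interpret P: prob_space P by fact
  interpret Q: prob_space Q by fact
  interpret N: prob_space N by fact
  interpret PN: pair_prob_space P N ..
  interpret QN: pair_prob_space Q N ..
  define t where "t = tv_dist P Q"
  have t: "0 \<le> t" unfolding t_def by (rule tv_dist_nonneg[OF P Q])
  have A': "A \<in> sets (Q \<Otimes>\<^sub>M N)" using A sets_eq by (simp cong: sets_pair_measure_cong)
  have slice: "emeasure P ((\<lambda>x. (x, y)) -` A) \<le> emeasure Q ((\<lambda>x. (x, y)) -` A) + t" for y
  proof -
    have S: "(\<lambda>x. (x, y)) -` A \<in> sets P" by (rule sets_Pair2[OF A])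
    then have "measure P ((\<lambda>x. (x, y)) -` A) \<le> measure Q ((\<lambda>x. (x, y)) -` A) + t"
      using measure_diff_le_tv_dist[OF P Q S] unfolding t_def by linarith
    then show ?thesis
      using t by (simp add: P.emeasure_eq_measure Q.emeasure_eq_measure ennreal_plus[symmetric]
      del: ennreal_plus)
  qed
  have "emeasure (P \<Otimes>\<^sub>M N) A \<le> (\<integral>\<^sup>+y. emeasure Q ((\<lambda>x. (x, y)) -` A) + t \<partial>N)"
    unfolding PN.emeasure_pair_measure_alt2[OF A] by (intro nn_integral_mono slice)
  also have "\<dots> = emeasure (Q \<Otimes>\<^sub>M N) A + t"
    using QN.measurable_emeasure_Pair2[OF A']
    by (simp add: nn_integral_add QN.emeasure_pair_measure_alt2[OF A'] N.emeasure_space_1)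
  finally show ?thesis
    using t by (simp add: PN.emeasure_eq_measure QN.emeasure_eq_measure ennreal_plus[symmetric] flip: t_def
      del: ennreal_plus)
qed

lemma measure_PiM_insert:
  fixes L :: "'i \<Rightarrow> 'a measure"
  assumes L: "\<And>i. i \<in> insert j J \<Longrightarrow> prob_space (L i)" and A: "A \<in> sets (PiM (insert j J) L)"
  shows "measure (PiM (insert j J) L) A =
    measure (L j \<Otimes>\<^sub>M PiM J L) ((\<lambda>(x, X). X(j := x)) -` A \<inter> space (L j \<Otimes>\<^sub>M PiM J L))"
proof -
  have upd: "(\<lambda>(x, X). X(j := x)) \<in> L j \<Otimes>\<^sub>M PiM J L \<rightarrow>\<^sub>M PiM (insert j J) L"
    unfolding case_prod_beta by (rule measurable_fun_upd[where J = J]) auto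
  have "measure (PiM (insert j J) L) A =
      measure (distr (L j \<Otimes>\<^sub>M PiM J L) (PiM (insert j J) L) (\<lambda>(x, X). X(j := x))) A"
    using L by (subst distr_pair_PiM_eq_PiM) auto
  also have "\<dots> =
      measure (L j \<Otimes>\<^sub>M PiM J L) ((\<lambda>(x, X). X(j := x)) -` A \<inter> space (L j \<Otimes>\<^sub>M PiM J L))"
    by (rule measure_distr[OF upd A])
  finally show ?thesis .
qed

lemma measure_PiM_fun_upd_le:
  fixes L :: "'i \<Rightarrow> 'a measure"
  assumes L: "\<And>i. i \<in> I \<Longrightarrow> prob_space (L i)" and Q: "prob_space Q"
    and sets_eq: "sets Q = sets (L j)" and j: "j \<in> I" and A: "A \<in> sets (PiM I L)"
  shows "measure (PiM I L) A \<le> measure (PiM I (L(j := Q))) A + tv_dist (L j) Q"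
proof -
  obtain J where I: "I = insert j J" and "j \<notin> J"
    using mk_disjoint_insert[OF j] by blast
  define upd where "upd = (\<lambda>(x, X). X(j := x) :: 'i \<Rightarrow> 'a)"
  have PiM_J: "PiM J (L(j := Q)) = PiM J L"
    using \<open>j \<notin> J\<close> by (intro PiM_cong) auto
  have space_eq: "space (Q \<Otimes>\<^sub>M PiM J L) = space (L j \<Otimes>\<^sub>M PiM J L)"
    using sets_eq by (intro sets_eq_imp_space_eq sets_pair_measure_cong) auto
  have "sets (PiM I (L(j := Q))) = sets (PiM I L)"
    using sets_eq by (intro sets_PiM_cong) auto
  with A have A_upd: "A \<in> sets (PiM I (L(j := Q)))" by simp
  define B where "B = upd -` A \<inter> space (L j \<Otimes>\<^sub>M PiM J L)"
  have "measure (PiM I L) A = measure (L j \<Otimes>\<^sub>M PiM J L) B"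
    unfolding B_def upd_def using L A unfolding I by (rule measure_PiM_insert)
  also have "\<dots> \<le> measure (Q \<Otimes>\<^sub>M PiM J L) B + tv_dist (L j) Q"
  proof (rule measure_pair_measure_le_tv_dist)
    show "prob_space (PiM J L)" using L I by (intro prob_space_PiM) auto
    show "B \<in> sets (L j \<Otimes>\<^sub>M PiM J L)"
      unfolding B_def upd_def I case_prod_beta using A I
      by (intro measurable_sets[OF measurable_fun_upd[where J = J]]) auto
  qed (use L j Q sets_eq in auto)
  also have "measure (Q \<Otimes>\<^sub>M PiM J L) B = measure (PiM I (L(j := Q))) A"
  proof -
    have "measure (PiM (insert j J) (L(j := Q))) A = measure ((L(j := Q)) j \<Otimes>\<^sub>M PiM J (L(j := Q)))
        ((\<lambda>(x, X). X(j := x)) -` A \<inter> space ((L(j := Q)) j \<Otimes>\<^sub>M PiM J (L(j := Q))))"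
      using L Q A_upd unfolding I by (intro measure_PiM_insert) auto
    then show ?thesis
      by (simp add: B_def upd_def I PiM_J space_eq)
  qed
  finally show ?thesis .
qed

lemma measure_PiM_swap_le:
  fixes L :: "'i \<Rightarrow> 'a measure"
  assumes L: "\<And>i. i \<in> I \<Longrightarrow> prob_space (L i)" and j: "j \<in> I" and k: "k \<in> I"
    and sets_eq: "sets (L j) = sets (L k)" and A: "A \<in> sets (PiM I L)"
  shows "measure (PiM I L) A \<le>
    measure (PiM I L) {y \<in> space (PiM I L). y(j := y k, k := y j) \<in> A} + 2 * tv_dist (L j) (L k)"
proof -
  define \<sigma> where "\<sigma> = id(j := k, k := j)"
  define swap where "swap = (\<lambda>y. \<lambda>i\<in>I. y (\<sigma> i) :: 'a)"
  have L_\<sigma>: "L(j := L k, k := L j) = L \<circ> \<sigma>"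
    by (auto simp: \<sigma>_def)
  have sets_L\<sigma>: "sets (PiM I (L \<circ> \<sigma>)) = sets (PiM I L)"
    using sets_eq by (intro sets_PiM_cong) (auto simp: \<sigma>_def)
  have \<sigma>: "inj_on \<sigma> I" "\<sigma> \<in> I \<rightarrow> I"
    using j k by (auto simp: \<sigma>_def inj_on_def)
  have "measure (PiM I L) A \<le> measure (PiM I (L(j := L k))) A + tv_dist (L j) (L k)"
    using L j k sets_eq A by (intro measure_PiM_fun_upd_le) auto
  also have "measure (PiM I (L(j := L k))) A \<le>
      measure (PiM I (L(j := L k, k := L j))) A + tv_dist ((L(j := L k)) k) (L j)"
  proof (rule measure_PiM_fun_upd_le)
    have "sets (PiM I (L(j := L k))) = sets (PiM I L)"
      using sets_eq by (intro sets_PiM_cong) auto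
    with A show "A \<in> sets (PiM I (L(j := L k)))" by simp
  qed (use L j k sets_eq in auto)
  also have "tv_dist ((L(j := L k)) k) (L j) = tv_dist (L j) (L k)"
    using sets_eq by (cases "j = k") (auto simp: tv_dist_commute)
  also have "PiM I (L(j := L k, k := L j)) = distr (PiM I L) (PiM I (L \<circ> \<sigma>)) swap"
    unfolding L_\<sigma> swap_def using distr_PiM_reindex[where K = I and M = L and f = \<sigma> and I = I] L \<sigma>
    by (simp add: comp_def)
  also have "measure \<dots> A = measure (PiM I L) (swap -` A \<inter> space (PiM I L))"
  proof (rule measure_distr)
    show "swap \<in> PiM I L \<rightarrow>\<^sub>M PiM I (L \<circ> \<sigma>)"
      unfolding swap_def using \<sigma> by (intro measurable_restrict) (auto intro: measurable_component_singleton)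
  qed (use A sets_L\<sigma> in simp)
  also have "swap -` A \<inter> space (PiM I L) = {y \<in> space (PiM I L). y(j := y k, k := y j) \<in> A}"
  proof -
    have "swap y = y(j := y k, k := y j)" if "y \<in> space (PiM I L)" for y
      using that j k by (auto simp: swap_def \<sigma>_def space_PiM PiE_def extensional_def)
    then show ?thesis by auto
  qed
  finally show ?thesis by simp
qed

definition weight_below :: "('i \<Rightarrow> real) \<Rightarrow> 'i set \<Rightarrow> ('i \<Rightarrow> real) \<Rightarrow> real \<Rightarrow> real" where
  "weight_below w I y t = sum w {i \<in> I. y i < t}"

lemma weight_below_cong:
  assumes "\<And>i. i \<in> I \<Longrightarrow> w i = w' i" and "\<And>i. i \<in> I \<Longrightarrow> y i = y' i"
  shows "weight_below w I y t = weight_below w' I y' t"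
  unfolding weight_below_def using assms by (intro sum.cong) auto

lemma ereal_le_weighted_quantile_iff:
  assumes w: "\<forall>i<n. 0 \<le> w i" and alpha: "alpha < 1"
  shows "ereal a \<le> weighted_quantile alpha w s n \<longleftrightarrow> weight_below w {..<n} s a < 1 - alpha"
proof -
  have "ereal a \<le> weighted_quantile alpha w s n \<longleftrightarrow>
      (\<forall>t. 1 - alpha \<le> sum w {i. i < n \<and> s i \<le> t} \<longrightarrow> a \<le> t)"
    unfolding weighted_quantile_def le_Inf_iff by auto
  also have "\<dots> \<longleftrightarrow> weight_below w {..<n} s a < 1 - alpha"
  proof (intro iffI allI impI)
    fix t assume below: "weight_below w {..<n} s a < 1 - alpha"
      and at_t: "1 - alpha \<le> sum w {i. i < n \<and> s i \<le> t}"
    show "a \<le> t"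
    proof (rule ccontr)
      assume "\<not> a \<le> t"
      then have "sum w {i. i < n \<and> s i \<le> t} \<le> weight_below w {..<n} s a"
        unfolding weight_below_def using w by (intro sum_mono2) auto
      with below at_t show False by linarith
    qed
  next
    assume le_all: "\<forall>t. 1 - alpha \<le> sum w {i. i < n \<and> s i \<le> t} \<longrightarrow> a \<le> t"
    define S where "S = {i \<in> {..<n}. s i < a}"
    show "weight_below w {..<n} s a < 1 - alpha"
    proof (cases "S = {}")
      case True
      then show ?thesis unfolding weight_below_def S_def[symmetric] using alpha by simp
    next
      case False
      define t where "t = Max (s ` S)"
      have "t \<in> s ` S" unfolding t_def using False by (simp add: S_def)
      then have "t < a" by (auto simp: S_def)
      moreover have "{i. i < n \<and> s i \<le> t} = S"
        using \<open>t < a\<close> by (auto simp: S_def t_def)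
      ultimately show ?thesis
        unfolding weight_below_def S_def[symmetric] using le_all by (auto simp: not_le[symmetric])
    qed
  qed
  finally show ?thesis .
qed

lemma error_set_weighted_quantile_iff:
  assumes "\<forall>i<n. 0 \<le> w i" and "alpha < 1"
  shows "e \<in> error_set Sig (weighted_quantile alpha w s n) \<longleftrightarrow>
    weight_below w {..<n} s (ncscore Sig e) < 1 - alpha"
  unfolding error_set_def using ereal_le_weighted_quantile_iff[OF assms] by simp

lemma sum_weight_high_rank_le:
  fixes w y :: "'i \<Rightarrow> real"
  assumes I: "finite I" and w: "\<forall>i\<in>I. 0 \<le> w i" and w_sum: "sum w I = 1" and alpha: "0 \<le> alpha"
  shows "sum w {k \<in> I. 1 - alpha \<le> weight_below w I y (y k)} \<le> alpha"
proof (cases "{k \<in> I. 1 - alpha \<le> weight_below w I y (y k)} = {}")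
  case True
  then show ?thesis using alpha by (simp only: sum.empty)
next
  case False
  define S where "S = {k \<in> I. 1 - alpha \<le> weight_below w I y (y k)}"
  have S: "finite S" "S \<subseteq> I" using I by (auto simp: S_def)
  have "Min (y ` S) \<in> y ` S" using S(1) False by (simp add: S_def)
  then obtain k where k: "k \<in> S" and "y k = Min (y ` S)" by (metis imageE)
  then have k_min: "\<forall>k'\<in>S. y k \<le> y k'" using S(1) by simp
  have "1 - alpha \<le> weight_below w I y (y k)" using k by (simp add: S_def)
  also have "\<dots> \<le> sum w (I - S)"
    unfolding weight_below_def using I w k_min by (intro sum_mono2) force+
  also have "\<dots> = 1 - sum w S"
    using I S w_sum by (simp add: sum_diff)
  finally show ?thesis by (simp add: S_def)
qed

lemma weight_below_swap_le:
  fixes w y :: "nat \<Rightarrow> real"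
  assumes k: "k \<le> n" and w: "\<forall>i\<le>n. 0 \<le> w i" and w_k: "w k \<le> w n"
  shows "weight_below w {..<n} (y(k := y n, n := y k)) t \<le> weight_below w {..n} y t"
proof -
  define \<sigma> where "\<sigma> = id(k := n, n := k)"
  have y_\<sigma>: "y(k := y n, n := y k) = y \<circ> \<sigma>"
    by (auto simp: \<sigma>_def)
  have "weight_below w {..<n} (y \<circ> \<sigma>) t = sum w {i \<in> {..<n}. y (\<sigma> i) < t}"
    by (simp add: weight_below_def)
  also have "\<dots> \<le> sum (w \<circ> \<sigma>) {i \<in> {..<n}. y (\<sigma> i) < t}"
    using w_k by (intro sum_mono) (auto simp: \<sigma>_def)
  also have "\<dots> \<le> sum (w \<circ> \<sigma>) {i \<in> {..n}. y (\<sigma> i) < t}"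
    using w k by (intro sum_mono2) (auto simp: \<sigma>_def)
  also have "\<dots> = weight_below w {..n} y t"
    unfolding weight_below_def using k
    by (intro sum.reindex_bij_witness[of _ \<sigma> \<sigma>]) (auto simp: \<sigma>_def)
  finally show ?thesis by (simp only: y_\<sigma>)
qed

lemma measurable_weight_below:
  fixes L :: "'i \<Rightarrow> real measure"
  assumes I: "finite I" "I \<subseteq> J" and k: "k \<in> J"
    and sets_L: "\<And>i. i \<in> J \<Longrightarrow> sets (L i) = sets borel"
  shows "(\<lambda>y. weight_below w I y (y k)) \<in> borel_measurable (PiM J L)"
proof -
  have component: "(\<lambda>y. y i) \<in> borel_measurable (PiM J L)" if "i \<in> J" for i
    using measurable_component_singleton[OF that, of L] sets_L[OF that]
    by (simp cong: measurable_cong_sets)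
  have "weight_below w I y (y k) = (\<Sum>i\<in>I. if y i < y k then w i else 0)" for y
    unfolding weight_below_def using I(1) by (rule sum.inter_filter)
  moreover have "(\<lambda>y. \<Sum>i\<in>I. if y i < y k then w i else 0) \<in> borel_measurable (PiM J L)"
    using I k component by (intro borel_measurable_sum measurable_If borel_measurable_less) auto
  ultimately show ?thesis by simp
qed

lemma (in prob_space) sum_weighted_prob_le:
  assumes I: "finite I" and E: "\<And>k. k \<in> I \<Longrightarrow> E k \<in> events"
    and bound: "\<And>x. x \<in> space M \<Longrightarrow> sum w {k \<in> I. x \<in> E k} \<le> c"
  shows "(\<Sum>k\<in>I. w k * prob (E k)) \<le> c"
proof -
  have integrable: "integrable M (\<lambda>x. w k * indicator (E k) x :: real)" if "k \<in> I" for k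
    using E[OF that]
    by (intro integrable_mult_right integrable_real_indicator) (auto simp: less_top[symmetric])
  have "(\<Sum>k\<in>I. w k * prob (E k)) = (\<Sum>k\<in>I. expectation (\<lambda>x. w k * indicator (E k) x))"
    using E by (intro sum.cong) auto
  also have "\<dots> = expectation (\<lambda>x. \<Sum>k\<in>I. w k * indicator (E k) x)"
    using integrable by (rule Bochner_Integration.integral_sum[symmetric])
  also have "\<dots> \<le> expectation (\<lambda>_. c)"
  proof (rule integral_mono)
    fix x assume "x \<in> space M"
    have "(\<Sum>k\<in>I. w k * indicator (E k) x) = (\<Sum>k\<in>I. if x \<in> E k then w k else 0)"
      by (intro sum.cong) (auto simp: indicator_def)
    also have "\<dots> = sum w {k \<in> I. x \<in> E k}"
      using I by (rule sum.inter_filter[symmetric])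
    finally show "(\<Sum>k\<in>I. w k * indicator (E k) x) \<le> c" using bound[OF \<open>x \<in> space M\<close>] by simp
  qed (use integrable in auto)
  also have "\<dots> = c" by (simp add: prob_space)
  finally show ?thesis .
qed

lemma measure_PiM_rank_swap_le:
  fixes L :: "nat \<Rightarrow> real measure" and w :: "nat \<Rightarrow> real"
  assumes L: "\<And>i. i \<le> n \<Longrightarrow> prob_space (L i)"
    and sets_L: "\<And>i. i \<le> n \<Longrightarrow> sets (L i) = sets borel"
    and w: "\<forall>i\<le>n. 0 \<le> w i" and w_k: "w k \<le> w n" and k: "k \<le> n"
  shows "measure (PiM {..n} L) {y \<in> space (PiM {..n} L). c \<le> weight_below w {..<n} y (y n)} \<le>
    measure (PiM {..n} L) {y \<in> space (PiM {..n} L). c \<le> weight_below w {..n} y (y k)}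
      + 2 * tv_dist (L k) (L n)"
proof -
  let ?P = "PiM {..n} L"
  let ?miss = "{y \<in> space ?P. c \<le> weight_below w {..<n} y (y n)}"
  let ?high = "{y \<in> space ?P. c \<le> weight_below w {..n} y (y k)}"
  interpret prob_space ?P using L by (intro prob_space_PiM) auto
  have events: "{y \<in> space ?P. c \<le> weight_below w I y (y j)} \<in> sets ?P" if "I \<subseteq> {..n}" "j \<le> n" for I j
    using that sets_L by (intro borel_measurable_le measurable_weight_below) (auto intro: finite_subset)
  have "prob ?miss \<le> prob {y \<in> space ?P. y(k := y n, n := y k) \<in> ?miss} + 2 * tv_dist (L k) (L n)"
    using L k sets_L by (intro measure_PiM_swap_le events) auto
  also have "prob {y \<in> space ?P. y(k := y n, n := y k) \<in> ?miss} \<le> prob ?high"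
  proof (rule finite_measure_mono)
    show "?high \<in> sets ?P" using k by (intro events) auto
    show "{y \<in> space ?P. y(k := y n, n := y k) \<in> ?miss} \<subseteq> ?high"
    proof
      fix y assume "y \<in> {y \<in> space ?P. y(k := y n, n := y k) \<in> ?miss}"
      then have "y \<in> space ?P" and "c \<le> weight_below w {..<n} (y(k := y n, n := y k)) (y k)" by auto
      with weight_below_swap_le[OF k w w_k, of y "y k"] show "y \<in> ?high" by simp
    qed
  qed
  finally show ?thesis by simp
qed

lemma measure_PiM_weighted_rank_ge:
  fixes L :: "nat \<Rightarrow> real measure" and w :: "nat \<Rightarrow> real"
  assumes L: "\<And>i. i \<le> n \<Longrightarrow> prob_space (L i)"
    and sets_L: "\<And>i. i \<le> n \<Longrightarrow> sets (L i) = sets borel"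
    and w: "\<forall>i\<le>n. 0 \<le> w i" and w_sum: "sum w {..n} = 1" and w_n: "\<forall>i<n. w i \<le> w n"
    and alpha: "0 \<le> alpha"
  shows "1 - alpha - 2 * (\<Sum>i<n. w i * tv_dist (L i) (L n)) \<le>
    measure (PiM {..n} L) {y \<in> space (PiM {..n} L). weight_below w {..<n} y (y n) < 1 - alpha}"
proof -
  let ?P = "PiM {..n} L"
  interpret prob_space ?P using L by (intro prob_space_PiM) auto
  define miss where "miss = {y \<in> space ?P. 1 - alpha \<le> weight_below w {..<n} y (y n)}"
  define high where "high k = {y \<in> space ?P. 1 - alpha \<le> weight_below w {..n} y (y k)}" for k
  have events: "{y \<in> space ?P. 1 - alpha \<le> weight_below w I y (y j)} \<in> sets ?P"
    if "I \<subseteq> {..n}" "j \<le> n" for I j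
    using that sets_L by (intro borel_measurable_le measurable_weight_below) (auto intro: finite_subset)
  have "prob miss = (\<Sum>k\<le>n. w k * prob miss)"
    using w_sum by (simp flip: sum_distrib_right)
  also have "\<dots> \<le> (\<Sum>k\<le>n. w k * (prob (high k) + 2 * tv_dist (L k) (L n)))"
    using w w_n L sets_L unfolding miss_def high_def
    by (intro sum_mono mult_left_mono measure_PiM_rank_swap_le) (auto simp: le_less)
  also have "\<dots> = (\<Sum>k\<le>n. w k * prob (high k)) + 2 * (\<Sum>k<n. w k * tv_dist (L k) (L n))"
    by (simp add: sum.distrib sum_distrib_left algebra_simps lessThan_Suc_atMost[symmetric] tv_dist_self)
  also have "(\<Sum>k\<le>n. w k * prob (high k)) \<le> alpha"
  proof (rule sum_weighted_prob_le)
    fix y assume "y \<in> space ?P"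
    then have "{k \<in> {..n}. y \<in> high k} = {k \<in> {..n}. 1 - alpha \<le> weight_below w {..n} y (y k)}"
      by (auto simp: high_def)
    then show "sum w {k \<in> {..n}. y \<in> high k} \<le> alpha"
      using sum_weight_high_rank_le[where I = "{..n}" and w = w and y = y] w w_sum alpha by simp
  qed (auto simp: high_def intro: events)
  finally have "prob miss \<le> alpha + 2 * (\<Sum>k<n. w k * tv_dist (L k) (L n))" by simp
  moreover have "{y \<in> space ?P. weight_below w {..<n} y (y n) < 1 - alpha} = space ?P - miss"
    by (auto simp: miss_def)
  moreover have "miss \<in> events" unfolding miss_def by (intro events) auto
  ultimately show ?thesis by (simp add: prob_compl)
qed

lemma (in prob_space) prob_weighted_rank_ge:
  fixes Y :: "nat \<Rightarrow> 'a \<Rightarrow> real" and w :: "nat \<Rightarrow> real"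
  assumes indep: "indep_vars (\<lambda>_. borel) Y {..n}"
    and w: "\<forall>i\<le>n. 0 \<le> w i" and w_sum: "sum w {..n} = 1" and w_n: "\<forall>i<n. w i \<le> w n"
    and alpha: "0 \<le> alpha"
  shows "1 - alpha - 2 * (\<Sum>i<n. w i * tv_dist (distr M borel (Y i)) (distr M borel (Y n))) \<le>
    prob {\<omega> \<in> space M. weight_below w {..<n} (\<lambda>i. Y i \<omega>) (Y n \<omega>) < 1 - alpha}"
proof -
  define L where "L i = distr M borel (Y i)" for i
  define V where "V \<omega> = (\<lambda>i\<in>{..n}. Y i \<omega>)" for \<omega>
  define C where "C = {y \<in> space (PiM {..n} L). weight_below w {..<n} y (y n) < 1 - alpha}"
  have Y: "random_variable borel (Y i)" if "i \<le> n" for i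
    using indep that by (auto simp: indep_vars_def2)
  have L: "prob_space (L i)" "sets (L i) = sets borel" if "i \<le> n" for i
    using Y[OF that] by (auto simp: L_def prob_space_distr)
  have sets_PiM: "sets (PiM {..n} L) = sets (PiM {..n} (\<lambda>_. borel))"
    using L by (intro sets_PiM_cong) auto
  have V: "V \<in> M \<rightarrow>\<^sub>M PiM {..n} (\<lambda>_. borel)"
    unfolding V_def using Y by (intro measurable_restrict) auto
  have distr_V: "distr M (PiM {..n} (\<lambda>_. borel)) V = PiM {..n} L"
    using indep Y unfolding V_def L_def by (subst (asm) indep_vars_iff_distr_eq_PiM') auto
  have C: "C \<in> sets (PiM {..n} (\<lambda>_. borel))"
    unfolding C_def sets_PiM[symmetric] using L
    by (intro borel_measurable_less measurable_weight_below) auto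
  have "1 - alpha - 2 * (\<Sum>i<n. w i * tv_dist (L i) (L n)) \<le> measure (PiM {..n} L) C"
    unfolding C_def using L w w_sum w_n alpha by (intro measure_PiM_weighted_rank_ge) auto
  also have "\<dots> = prob (V -` C \<inter> space M)"
    using measure_distr[OF V C] distr_V by simp
  also have "V -` C \<inter> space M =
      {\<omega> \<in> space M. weight_below w {..<n} (\<lambda>i. Y i \<omega>) (Y n \<omega>) < 1 - alpha}"
  proof -
    have "V \<omega> n = Y n \<omega>" "weight_below w {..<n} (V \<omega>) t = weight_below w {..<n} (\<lambda>i. Y i \<omega>) t"
      for \<omega> t unfolding V_def by (auto intro: weight_below_cong)
    then show ?thesis
      using measurable_space[OF V] sets_eq_imp_space_eq[OF sets_PiM] by (auto simp: C_def)
  qed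
  finally show ?thesis by (simp only: L_def)
qed

lemma (in prob_space) prob_weighted_conformal_coverage:
  fixes s :: "nat \<Rightarrow> 'a \<Rightarrow> real" and T :: "'a \<Rightarrow> real" and w :: "nat \<Rightarrow> real"
  assumes indep: "indep_vars (\<lambda>_. borel) (\<lambda>i. if i = n then T else s i) {..n}"
    and N: "prob_space N" "sets N = sets borel"
    and w: "\<forall>i<n. 0 \<le> w i" and w_test: "\<forall>i<n. w i \<le> w_test" and w_sum: "(\<Sum>i<n. w i) + w_test = 1"
    and alpha: "0 \<le> alpha"
  shows "1 - alpha - 2 * (\<Sum>i<n. w i * tv_dist (distr M borel (s i)) N) - 2 * tv_dist N (distr M borel T)
    \<le> prob {\<omega> \<in> space M. weight_below w {..<n} (\<lambda>i. s i \<omega>) (T \<omega>) < 1 - alpha}"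
proof -
  define Y where "Y = (\<lambda>i. if i = n then T else s i)"
  have Y: "Y i \<in> borel_measurable M" if "i \<le> n" for i
    using indep that by (auto simp: indep_vars_def2 Y_def)
  then have s: "s i \<in> borel_measurable M" if "i < n" for i
    using that Y[of i] by (simp add: Y_def)
  have w_test_nonneg: "0 \<le> w_test" and w_le_1: "(\<Sum>i<n. w i) \<le> 1"
    using w w_test w_sum sum_nonneg[of "{..<n}" w] by (cases "n = 0"; force)+
  have "weight_below (w(n := w_test)) {..<n} (\<lambda>i. Y i \<omega>) t = weight_below w {..<n} (\<lambda>i. s i \<omega>) t"
    for \<omega> t
    by (rule weight_below_cong) (auto simp: Y_def)
  moreover have "1 - alpha - 2 * (\<Sum>i<n. (w(n := w_test)) i * tv_dist (distr M borel (Y i)) (distr M borel (Y n)))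
      \<le> prob {\<omega> \<in> space M.
          weight_below (w(n := w_test)) {..<n} (\<lambda>i. Y i \<omega>) (Y n \<omega>) < 1 - alpha}"
    using indep w w_test w_test_nonneg w_sum alpha unfolding Y_def[symmetric]
    by (intro prob_weighted_rank_ge) (auto simp: lessThan_Suc_atMost[symmetric])
  moreover have "(\<Sum>i<n. w i * tv_dist (distr M borel (s i)) (distr M borel T)) \<le>
      (\<Sum>i<n. w i * tv_dist (distr M borel (s i)) N) + tv_dist N (distr M borel T)"
    using Y[of n] s N w w_le_1 unfolding Y_def
    by (intro sum_weighted_tv_dist_triangle) (auto intro!: prob_space_distr)
  ultimately show ?thesis by (simp add: Y_def)
qed

lemma normalized_conformal_weights:
  fixes w :: "nat \<Rightarrow> real"
  assumes "\<forall>i<n. 0 \<le> w i \<and> w i \<le> 1"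
  shows "\<forall>i<n. 0 \<le> w i / (1 + (\<Sum>j<n. w j))"
    and "\<forall>i<n. w i / (1 + (\<Sum>j<n. w j)) \<le> 1 / (1 + (\<Sum>j<n. w j))"
    and "(\<Sum>i<n. w i / (1 + (\<Sum>j<n. w j))) + 1 / (1 + (\<Sum>j<n. w j)) = 1"
proof -
  have "0 \<le> (\<Sum>j<n. w j)" using assms by (intro sum_nonneg) auto
  then show "\<forall>i<n. 0 \<le> w i / (1 + (\<Sum>j<n. w j))"
    and "\<forall>i<n. w i / (1 + (\<Sum>j<n. w j)) \<le> 1 / (1 + (\<Sum>j<n. w j))"
    and "(\<Sum>i<n. w i / (1 + (\<Sum>j<n. w j))) + 1 / (1 + (\<Sum>j<n. w j)) = 1"
    using assms by (auto simp: divide_right_mono simp flip: sum_divide_distrib add_divide_distrib)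
qed

theorem theorem4:
  fixes M :: "'w measure"
    and n :: nat
    and z x :: "real^'nx" and v u :: "real^'nu"
    and xs :: "nat \<Rightarrow> real^'nx" and us :: "nat \<Rightarrow> real^'nu"
    and R :: "((real^'nx) \<times> (real^'nu)) set"
    and MR rho alpha eps epshat :: real
    and Sig :: "real^'nx^'nx"
    and s :: "nat \<Rightarrow> 'w \<Rightarrow> real" and skk st :: "'w \<Rightarrow> real"
    and err :: "'w \<Rightarrow> real^'nx"
  assumes "prob_space M"
    and "(z, v) \<in> R" and "0 \<le> MR"
    and "\<forall>p\<in>R. dist p (z, v) \<le> MR"
    and "(x, u) \<in> R"
    and "0 < rho" and "rho \<le> 1"
    and "0 < alpha" and "alpha < 1"
    and "transpose Sig = Sig" and "\<forall>y. y \<noteq> 0 \<longrightarrow> 0 < y \<bullet> (Sig *v y)"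
    and "prob_space.indep_vars M (\<lambda>_. borel) (\<lambda>i. if i = n then skk else s i) {..n}"
    and "prob_space.indep_vars M (\<lambda>_. borel) (\<lambda>i. if i = n then st else s i) {..n}"
    and "\<forall>\<omega>\<in>space M. st \<omega> = ncscore Sig (err \<omega>)"
    and "\<forall>i<n. tv_dist (distr M borel (s i)) (distr M borel skk)
                \<le> eps * dist (z, v) (xs i, us i)"
    and "0 \<le> epshat" and "epshat \<le> eps"
    and "tv_dist (distr M borel skk) (distr M borel st) \<le> epshat * dist (x, u) (z, v)"
  shows
    "let w = (\<lambda>i. rho powr dist (z, v) (xs i, us i));
         wt = (\<lambda>i. w i / (1 + (\<Sum>j<n. w j)));
         q = (\<lambda>\<omega>. weighted_quantile alpha wt (\<lambda>i. s i \<omega>) n)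
     in 1 - alpha - 2 * (\<Sum>i<n. wt i * tv_dist (distr M borel (s i)) (distr M borel skk))
          - 2 * epshat * MR
        \<le> measure M {\<omega> \<in> space M. err \<omega> \<in> error_set Sig (q \<omega>)}"
proof -
  interpret M: prob_space M by fact
  define w where "w = (\<lambda>i. rho powr dist (z, v) (xs i, us i))"
  define wt where "wt = (\<lambda>i. w i / (1 + (\<Sum>j<n. w j)))"
  have "\<forall>i<n. 0 \<le> w i \<and> w i \<le> 1"
    using assms(6,7) by (auto simp: w_def powr_le1)
  from normalized_conformal_weights[OF this] have weights:
    "\<forall>i<n. 0 \<le> wt i" "\<forall>i<n. wt i \<le> 1 / (1 + (\<Sum>j<n. w j))" "(\<Sum>i<n. wt i) + 1 / (1 + (\<Sum>j<n. w j)) = 1"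
    unfolding wt_def by simp_all
  \<comment> \<open>The first independence hypothesis is only needed for the measurability of skk.\<close>
  have "\<forall>i\<in>{..n}. (if i = n then skk else s i) \<in> borel_measurable M"
    using assms(12) unfolding M.indep_vars_def2 by blast
  from bspec[OF this, of n] have nominal: "prob_space (distr M borel skk)" "sets (distr M borel skk) = sets borel"
    by (auto intro: M.prob_space_distr)
  have "1 - alpha - 2 * (\<Sum>i<n. wt i * tv_dist (distr M borel (s i)) (distr M borel skk))
      - 2 * tv_dist (distr M borel skk) (distr M borel st)
      \<le> M.prob {\<omega> \<in> space M. weight_below wt {..<n} (\<lambda>i. s i \<omega>) (st \<omega>) < 1 - alpha}"
    using assms(8) by (intro M.prob_weighted_conformal_coverage[OF assms(13) nominal weights]) simp
  moreover have "tv_dist (distr M borel skk) (distr M borel st) \<le> epshat * MR"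
    using assms(4,5,16,18) by (meson mult_left_mono order_trans)
  moreover have "{\<omega> \<in> space M. weight_below wt {..<n} (\<lambda>i. s i \<omega>) (st \<omega>) < 1 - alpha} =
      {\<omega> \<in> space M. err \<omega> \<in> error_set Sig (weighted_quantile alpha wt (\<lambda>i. s i \<omega>) n)}"
    using assms(14) by (auto simp: error_set_weighted_quantile_iff[OF weights(1) assms(9)])
  ultimately have "1 - alpha - 2 * (\<Sum>i<n. wt i * tv_dist (distr M borel (s i)) (distr M borel skk))
      - 2 * epshat * MR
      \<le> measure M {\<omega> \<in> space M. err \<omega> \<in> error_set Sig (weighted_quantile alpha wt (\<lambda>i. s i \<omega>) n)}"
    by simp
  then show ?thesis unfolding Let_def wt_def w_def .
qed

end
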